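(* Let $\Omega$ be a finite set of $n$ items, let $k,l\ge 1$ be integers, and let $f_1,\dots,f_m:2^\Omega\to\mathbb{R}_{\ge 0}$ be submodular (not necessarily monotone) functions. Then the algorithm $\textsf{Sampling-Greedy}$ returns a random set $S\subseteq\Omega$ with $|S|\le l$ such that $$\mathbb{E}_S[F(S)]\;\ge\;\frac{1}{2e}\,F(O),$$ where $O\in\arg\max_{S'\subseteq\Omega,\ |S'|\le l}F(S')$.
   Context: Define $F(S)=\sum_{i=1}^m\max_{A\subseteq S,\ |A|\le k} f_i(A)$. Submodularity of $f_i$: $f_i(A\cup\{x\})-f_i(A)\ge f_i(A'\cup\{x\})-f_i(A')$ for $A\subseteq A'$, $x\notin A'$. Notation: add a set $\Phi$ of $l$ dummy items and let $\Omega'=\Omega\cup\Phi$; extend each $f_i$ by $f_i(A)=f_i(A\cap\Omega)$ for $A\subseteq\Omega'$. Let $\Delta_i(x,A)=f_i(A\cup\{x\})-f_i(A)$; for $y\in A$, $\nabla_i(x,y,A)=f_i((A\setminus\{y\})\cup\{x\})-f_i(A)$; for $|A|\le k$: $\nabla_i(x,A)=0$ if $x\in A$; $\nabla_i(x,A)=\max\{0,\max_{y\in A}\nabla_i(x,y,A),\Delta_i(x,A)\}$ if $x\notin A$, $|A|<k$; $\nabla_i(x,A)=\max\{0,\max_{y\in A}\nabla_i(x,y,A)\}$ if $x\notin A$, $|A|=k$. Define $\textsf{Rep}_i(x,A)$ to be $\emptyset$ if $\nabla_i(x,A)=0$, or if $\nabla_i(x,A)>0$, $|A|<k$ and $\max_{y\in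 A}\nabla_i(x,y,A)<\Delta_i(x,A)$; otherwise (i.e. $\nabla_i(x,A)>0$ and either $|A|=k$, or $|A|<k$ and $\max_{y\in A}\nabla_i(x,y,A)\ge\Delta_i(x,A)$) it is $\{y^*\}$ for some $y^*\in\arg\max_{y\in A}\nabla_i(x,y,A)$. $\textsf{Trim}(B,f_i)$: start with $A\leftarrow B$, go once through the elements of $B$ in a fixed order and remove an element $x$ currently in $A$ whenever $f_i(A)-f_i(A\setminus\{x\})<0$; return $A$. $\textsf{Sampling-Greedy}$: initialize $S\leftarrow\emptyset$ and $T_i\leftarrow\emptyset$ for all $i\in[m]$. Repeat $l$ times: let $M$ be a set of exactly $l$ items of $\Omega'$ maximizing $\sum_{x\in M}\sum_{i=1}^m\nabla_i(x,T_i)$; pick $x^*$ uniformly at random from $M$ and set $S\leftarrow S\cup\{x^*\}$; for each $i\in[m]$ with $\nabla_i(x^*,T_i)>0$, set $T_i\leftarrow (T_i\setminus\textsf{Rep}_i(x^*,T_i))\cup\{x^*\}$ and then $T_i\leftarrow\textsf{Trim}(T_i,f_i)$. Finally output $S$ with dummy items removed (i.e. $S\cap\Omega$). *)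

theory Defs
  imports "HOL-Probability.Probability"
begin

text \<open>Objective: F(S) = sum over i < m of max over A subseteq S, |A| <= k of f i A.
  (Indices 0..m-1 stand for 1..m.)\<close>
definition Fobj :: "(nat \<Rightarrow> 'a set \<Rightarrow> real) \<Rightarrow> nat \<Rightarrow> nat \<Rightarrow> 'a set \<Rightarrow> real" where
  "Fobj f m k S = (\<Sum>i<m. Max {f i A | A. A \<subseteq> S \<and> card A \<le> k})"

definition submodular_on :: "'a set \<Rightarrow> ('a set \<Rightarrow> real) \<Rightarrow> bool" where
  "submodular_on \<Omega> g \<longleftrightarrow> (\<forall>A A' x. A \<subseteq> A' \<and> A' \<subseteq> \<Omega> \<and> x \<in> \<Omega> \<and> x \<notin> A' \<longrightarrow>
      g (insert x A) - g A \<ge> g (insert x A') - g A')"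

text \<open>Items of the extended ground set: Inl a for real items, Inr j (j < l) for the l dummy items.\<close>
definition ext_ground :: "'a set \<Rightarrow> nat \<Rightarrow> ('a + nat) set" where
  "ext_ground \<Omega> l = Inl ` \<Omega> \<union> Inr ` {..<l}"

definition ext_fun :: "('a set \<Rightarrow> real) \<Rightarrow> ('a + nat) set \<Rightarrow> real" where
  "ext_fun g A = g (Inl -` A)"

definition Delta :: "('b set \<Rightarrow> real) \<Rightarrow> 'b \<Rightarrow> 'b set \<Rightarrow> real" where
  "Delta g x A = g (insert x A) - g A"

definition Nab2 :: "('b set \<Rightarrow> real) \<Rightarrow> 'b \<Rightarrow> 'b \<Rightarrow> 'b set \<Rightarrow> real" where
  "Nab2 g x y A = g (insert x (A - {y})) - g A"

definition Nab :: "('b set \<Rightarrow> real) \<Rightarrow> nat \<Rightarrow> 'b \<Rightarrow> 'b set \<Rightarrow> real" where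
  "Nab g k x A =
     (if x \<in> A then 0
      else if card A < k then Max ({0, Delta g x A} \<union> (\<lambda>y. Nab2 g x y A) ` A)
      else Max ({0} \<union> (\<lambda>y. Nab2 g x y A) ` A))"

text \<open>Rep; the argmax element y* is supplied by the tie-breaking function ch.\<close>
definition Rep :: "('b set \<Rightarrow> real) \<Rightarrow> nat \<Rightarrow> ('b \<Rightarrow> 'b set \<Rightarrow> 'b) \<Rightarrow> 'b \<Rightarrow> 'b set \<Rightarrow> 'b set" where
  "Rep g k ch x A =
     (if Nab g k x A = 0 then {}
      else if card A < k \<and> (A = {} \<or> Max ((\<lambda>y. Nab2 g x y A) ` A) < Delta g x A) then {}
      else {ch x A})"

definition valid_argmax_choice :: "('b set \<Rightarrow> real) \<Rightarrow> ('b \<Rightarrow> 'b set \<Rightarrow> 'b) \<Rightarrow> bool" where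
  "valid_argmax_choice g ch \<longleftrightarrow> (\<forall>x A. finite A \<and> A \<noteq> {} \<longrightarrow>
      ch x A \<in> A \<and> (\<forall>y\<in>A. Nab2 g x y A \<le> Nab2 g x (ch x A) A))"

definition Trim :: "('b set \<Rightarrow> real) \<Rightarrow> 'b list \<Rightarrow> 'b set \<Rightarrow> 'b set" where
  "Trim g ord B = foldl (\<lambda>A x. if x \<in> B \<and> x \<in> A \<and> g A - g (A - {x}) < 0 then A - {x} else A) B ord"

definition score :: "(nat \<Rightarrow> 'a set \<Rightarrow> real) \<Rightarrow> nat \<Rightarrow> nat \<Rightarrow> (nat \<Rightarrow> ('a + nat) set) \<Rightarrow> ('a + nat) set \<Rightarrow> real" where
  "score f m k T M = (\<Sum>x\<in>M. \<Sum>i<m. Nab (ext_fun (f i)) k x (T i))"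

definition valid_selM :: "(nat \<Rightarrow> 'a set \<Rightarrow> real) \<Rightarrow> nat \<Rightarrow> nat \<Rightarrow> nat \<Rightarrow> 'a set \<Rightarrow>
    (('a + nat) set \<Rightarrow> (nat \<Rightarrow> ('a + nat) set) \<Rightarrow> ('a + nat) set) \<Rightarrow> bool" where
  "valid_selM f m k l \<Omega> selM \<longleftrightarrow> (\<forall>S T.
     selM S T \<subseteq> ext_ground \<Omega> l \<and> card (selM S T) = l \<and>
     (\<forall>M'. M' \<subseteq> ext_ground \<Omega> l \<and> card M' = l \<longrightarrow> score f m k T M' \<le> score f m k T (selM S T)))"

definition sg_update :: "(nat \<Rightarrow> 'a set \<Rightarrow> real) \<Rightarrow> nat \<Rightarrow> nat \<Rightarrow>
    (nat \<Rightarrow> ('a + nat) \<Rightarrow> ('a + nat) set \<Rightarrow> ('a + nat)) \<Rightarrow> ('a + nat) list \<Rightarrow>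
    ('a + nat) \<Rightarrow> ('a + nat) set \<times> (nat \<Rightarrow> ('a + nat) set) \<Rightarrow> ('a + nat) set \<times> (nat \<Rightarrow> ('a + nat) set)" where
  "sg_update f m k ch ord x st =
     (insert x (fst st),
      (\<lambda>i. if i < m \<and> Nab (ext_fun (f i)) k x (snd st i) > 0
           then Trim (ext_fun (f i)) ord
                  (insert x (snd st i - Rep (ext_fun (f i)) k (ch i) x (snd st i)))
           else snd st i))"

definition sg_step :: "(nat \<Rightarrow> 'a set \<Rightarrow> real) \<Rightarrow> nat \<Rightarrow> nat \<Rightarrow>
    (('a + nat) set \<Rightarrow> (nat \<Rightarrow> ('a + nat) set) \<Rightarrow> ('a + nat) set) \<Rightarrow>
    (nat \<Rightarrow> ('a + nat) \<Rightarrow> ('a + nat) set \<Rightarrow> ('a + nat)) \<Rightarrow> ('a + nat) list \<Rightarrow>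
    ('a + nat) set \<times> (nat \<Rightarrow> ('a + nat) set) \<Rightarrow> (('a + nat) set \<times> (nat \<Rightarrow> ('a + nat) set)) pmf" where
  "sg_step f m k selM ch ord st =
     map_pmf (\<lambda>x. sg_update f m k ch ord x st) (pmf_of_set (selM (fst st) (snd st)))"

definition sampling_greedy :: "(nat \<Rightarrow> 'a set \<Rightarrow> real) \<Rightarrow> nat \<Rightarrow> nat \<Rightarrow> nat \<Rightarrow>
    (('a + nat) set \<Rightarrow> (nat \<Rightarrow> ('a + nat) set) \<Rightarrow> ('a + nat) set) \<Rightarrow>
    (nat \<Rightarrow> ('a + nat) \<Rightarrow> ('a + nat) set \<Rightarrow> ('a + nat)) \<Rightarrow> ('a + nat) list \<Rightarrow> 'a set pmf" where
  "sampling_greedy f m k l selM ch ord =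
     map_pmf (\<lambda>st. Inl -` fst st)
       (((\<lambda>p. bind_pmf p (sg_step f m k selM ch ord)) ^^ l) (return_pmf ({}, (\<lambda>_. {}))))"

end

theory Submission
  imports Defs
begin

text \<open>
  The potential of a state is \<open>P = \<Sum>\<^sub>i f\<^sub>i(T\<^sub>i)\<close>.  Replacing a single element of \<open>T\<^sub>i\<close> by a new one
  realises exactly the swap gain \<open>\<nabla>\<^sub>i\<close>, and Trim never lowers \<open>f\<^sub>i\<close> while making every
  removal gain of \<open>T\<^sub>i\<close> nonnegative.  An exchange argument then bounds the total swap gain of
  the \<open>l\<close> items of \<open>O \<union> \<Phi>\<close> by \<open>\<Sum>\<^sub>i f\<^sub>i(O\<^sub>i \<union> T\<^sub>i) - 2 f\<^sub>i(T\<^sub>i)\<close>, where \<open>O\<^sub>i \<subseteq> O\<close> attains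
  the inner maximum of \<open>F(O)\<close>; since the chosen \<open>M\<close> maximizes the total swap gain and \<open>x\<^sup>*\<close> is
  uniform in \<open>M\<close>, the expected potential grows by at least \<open>1/l\<close> of that.  Each item lies in
  \<open>S\<close> after \<open>t\<close> rounds with probability at most \<open>1 - (1 - 1/l)\<^sup>t\<close>, so the sampling lemma for
  nonnegative submodular functions gives \<open>\<bbbE> f\<^sub>i(O\<^sub>i \<union> T\<^sub>i) \<ge> (1 - 1/l)\<^sup>t f\<^sub>i(O\<^sub>i)\<close>.  The
  resulting recurrence solves to \<open>\<bbbE> P\<^sub>l \<ge> ((1 - 1/l)\<^sup>l - (1 - 2/l)\<^sup>l) F(O) \<ge> F(O) / (2e)\<close>, and
  \<open>F(S) \<ge> P\<^sub>l\<close> because every \<open>T\<^sub>i\<close> is a subset of \<open>S\<close> of size at most \<open>k\<close>.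
\<close>

section \<open>Submodular functions\<close>

lemma submodular_onD:
  "submodular_on U g \<Longrightarrow> A \<subseteq> A' \<Longrightarrow> A' \<subseteq> U \<Longrightarrow> x \<in> U \<Longrightarrow> x \<notin> A' \<Longrightarrow>
   g (insert x A) - g A \<ge> g (insert x A') - g A'"
  unfolding submodular_on_def by blast

lemma submodular_on_ext_fun:
  assumes "submodular_on \<Omega> g"
  shows "submodular_on (ext_ground \<Omega> l) (ext_fun g)"
  unfolding submodular_on_def
proof (intro allI impI, elim conjE)
  fix A A' x
  assume h: "A \<subseteq> A'" "A' \<subseteq> ext_ground \<Omega> l" "x \<in> ext_ground \<Omega> l" "x \<notin> A'"
  show "ext_fun g (insert x A) - ext_fun g A \<ge> ext_fun g (insert x A') - ext_fun g A'"
  proof (cases x)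
    case (Inl a)
    have "Inl -` A \<subseteq> Inl -` A'" "Inl -` A' \<subseteq> \<Omega>" "a \<in> \<Omega>" "a \<notin> Inl -` A'"
      using h Inl by (auto simp: ext_ground_def)
    moreover have "\<And>B. Inl -` insert x B = insert a (Inl -` B)" using Inl by auto
    ultimately show ?thesis using submodular_onD[OF assms] by (simp add: ext_fun_def)
  next
    case Inr
    then have "\<And>B. Inl -` insert x B = (Inl -` B :: 'a set)" by auto
    then show ?thesis by (simp add: ext_fun_def)
  qed
qed

lemma submodular_on_union:
  assumes "submodular_on U g" "Q \<subseteq> U"
  shows "submodular_on U (\<lambda>X. g (Q \<union> X))"
  unfolding submodular_on_def
proof (intro allI impI, elim conjE)
  fix A A' x assume h: "A \<subseteq> A'" "A' \<subseteq> U" "x \<in> U" "x \<notin> A'"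
  show "g (Q \<union> insert x A) - g (Q \<union> A) \<ge> g (Q \<union> insert x A') - g (Q \<union> A')"
  proof (cases "x \<in> Q")
    case True
    then show ?thesis by (simp add: insert_absorb)
  next
    case False
    have "Q \<union> A \<subseteq> Q \<union> A'" "Q \<union> A' \<subseteq> U" "x \<notin> Q \<union> A'" using h False assms by auto
    from submodular_onD[OF assms(1) this(1,2) h(3) this(3)] show ?thesis by simp
  qed
qed

lemma removal_gain_antimono:
  assumes "submodular_on U g" "A \<subseteq> B" "B \<subseteq> U" "y \<in> A"
  shows "g B - g (B - {y}) \<le> g A - g (A - {y})"
proof -
  have "A - {y} \<subseteq> B - {y}" "B - {y} \<subseteq> U" "y \<in> U" "y \<notin> B - {y}" using assms by auto
  from submodular_onD[OF assms(1) this] show ?thesis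
    using assms by (simp add: insert_absorb subsetD)
qed

lemma union_gain_le_sum_gains:
  assumes "submodular_on U g" "finite Q" "Q \<subseteq> U" "T \<subseteq> U"
  shows "g (Q \<union> T) - g T \<le> (\<Sum>q\<in>Q - T. g (insert q T) - g T)"
  using assms(2,3)
proof (induction Q rule: finite_induct)
  case empty
  then show ?case by simp
next
  case (insert a Q)
  show ?case
  proof (cases "a \<in> T")
    case True
    then have "insert a Q \<union> T = Q \<union> T" "insert a Q - T = Q - T" by auto
    then show ?thesis using insert by simp
  next
    case False
    have "T \<subseteq> Q \<union> T" "Q \<union> T \<subseteq> U" "a \<in> U" "a \<notin> Q \<union> T"
      using insert assms(4) False by auto
    from submodular_onD[OF assms(1) this] have
      "g (insert a (Q \<union> T)) - g (Q \<union> T) \<le> g (insert a T) - g T" by simp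
    moreover have "insert a Q - T = insert a (Q - T)" "a \<notin> Q - T" using False insert.hyps by auto
    ultimately show ?thesis using insert by simp
  qed
qed

lemma sum_removal_gains_le:
  assumes "submodular_on U g" "finite T" "T \<subseteq> U"
  shows "(\<Sum>y\<in>T. g T - g (T - {y})) \<le> g T - g {}"
  using assms(2,3)
proof (induction T rule: finite_induct)
  case empty
  then show ?case by simp
next
  case (insert a T)
  have "(\<Sum>y\<in>T. g (insert a T) - g (insert a T - {y})) \<le> (\<Sum>y\<in>T. g T - g (T - {y}))"
    using removal_gain_antimono[OF assms(1), of T "insert a T"] insert by (intro sum_mono) auto
  moreover have "insert a T - {a} = T" using insert by auto
  ultimately show ?case using insert by simp
qed

lemma submodular_on_inter_prefix_ge:
  assumes sub: "submodular_on U h" and dys: "distinct ys" and ysU: "set ys \<subseteq> U"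
    and j: "j \<le> length ys"
  shows "h (A \<inter> set (take j ys)) \<ge> h {} +
      (\<Sum>i<j. (if ys ! i \<in> A then 1 else 0) * (h (set (take (Suc i) ys)) - h (set (take i ys))))"
  using j
proof (induction j)
  case 0
  then show ?case by simp
next
  case (Suc j)
  let ?y = "ys ! j" and ?P = "set (take j ys)"
  have jl: "j < length ys" using Suc by simp
  have take_Suc: "set (take (Suc j) ys) = insert ?y ?P" using jl by (simp add: take_Suc_conv_app_nth)
  have y_new: "?y \<notin> ?P"
    using distinct_take[OF dys, of "Suc j"] by (simp add: take_Suc_conv_app_nth[OF jl])
  have IH: "h (A \<inter> ?P) \<ge> h {} +
      (\<Sum>i<j. (if ys ! i \<in> A then 1 else 0) * (h (set (take (Suc i) ys)) - h (set (take i ys))))"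
    using Suc by simp
  show ?case
  proof (cases "?y \<in> A")
    case True
    have "A \<inter> ?P \<subseteq> ?P" "?P \<subseteq> U" "?y \<in> U"
      using ysU nth_mem[OF jl] set_take_subset[of j ys] by blast+
    from submodular_onD[OF sub this y_new]
    have "h (insert ?y (A \<inter> ?P)) - h (A \<inter> ?P) \<ge> h (insert ?y ?P) - h ?P" .
    moreover have "A \<inter> set (take (Suc j) ys) = insert ?y (A \<inter> ?P)" using take_Suc True by auto
    ultimately show ?thesis using IH True take_Suc by simp
  next
    case False
    then have "A \<inter> set (take (Suc j) ys) = A \<inter> ?P" using take_Suc by auto
    then show ?thesis using IH False by simp
  qed
qed

section \<open>Swap gains\<close>

lemma Nab_nonneg: "finite A \<Longrightarrow> Nab g k x A \<ge> 0"
  unfolding Nab_def by (auto intro: Max_ge)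

lemma Nab_ge_Nab2:
  assumes "finite A" "x \<notin> A" "y \<in> A"
  shows "Nab g k x A \<ge> Nab2 g x y A"
proof -
  have "Nab2 g x y A \<le> Max ({0, Delta g x A} \<union> (\<lambda>y. Nab2 g x y A) ` A)"
    "Nab2 g x y A \<le> Max ({0} \<union> (\<lambda>y. Nab2 g x y A) ` A)"
    using assms by (intro Max_ge; simp)+
  then show ?thesis using assms(2) by (simp add: Nab_def)
qed

lemma Nab_ge_Delta:
  assumes "finite A" "x \<notin> A" "card A < k"
  shows "Nab g k x A \<ge> Delta g x A"
proof -
  have "Delta g x A \<le> Max ({0, Delta g x A} \<union> (\<lambda>y. Nab2 g x y A) ` A)"
    using assms by (intro Max_ge) simp_all
  then show ?thesis using assms(2,3) by (simp add: Nab_def)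
qed

lemma Nab2_ge_Delta_minus_removal_gain:
  assumes "submodular_on U g" "T \<subseteq> U" "q \<in> U" "q \<notin> T" "y \<in> T"
  shows "Nab2 g q y T \<ge> Delta g q T - (g T - g (T - {y}))"
proof -
  have "T - {y} \<subseteq> T" by auto
  from submodular_onD[OF assms(1) this assms(2-4)] show ?thesis
    unfolding Nab2_def Delta_def by simp
qed

text \<open>
  When \<open>T\<close> is full, the items of \<open>Q - T\<close> are injected into \<open>T - Q\<close> and each is swapped against
  its image; the removal gains paid for this sum to at most \<open>g T - g {}\<close>.
\<close>
lemma sum_Nab_ge_full:
  assumes sub: "submodular_on U g" and T: "finite T" "T \<subseteq> U" "card T = k"
    and Q: "finite Q" "Q \<subseteq> U" "card Q \<le> k"
    and trimmed: "\<And>y. y \<in> T \<Longrightarrow> g T - g (T - {y}) \<ge> 0"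
  shows "(\<Sum>q\<in>Q - T. Nab g k q T) \<ge> (\<Sum>q\<in>Q - T. Delta g q T) - (g T - g {})"
proof -
  have "card (Q - T) \<le> card (T - Q)"
    using T Q by (simp add: card_Diff_subset_Int Int_commute)
  then obtain \<pi> where \<pi>: "\<pi> ` (Q - T) \<subseteq> T - Q" "inj_on \<pi> (Q - T)"
    using card_le_inj[of "Q - T" "T - Q"] T Q by auto
  define r where "r y = g T - g (T - {y})" for y
  have "(\<Sum>q\<in>Q - T. Delta g q T - r (\<pi> q)) \<le> (\<Sum>q\<in>Q - T. Nab g k q T)"
  proof (rule sum_mono)
    fix q assume q: "q \<in> Q - T"
    then have y: "\<pi> q \<in> T" using \<pi> by auto
    have "Nab2 g q (\<pi> q) T \<le> Nab g k q T" using Nab_ge_Nab2[OF T(1) _ y] q by simp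
    moreover have "Delta g q T - r (\<pi> q) \<le> Nab2 g q (\<pi> q) T"
      unfolding r_def using Nab2_ge_Delta_minus_removal_gain[OF sub T(2) _ _ y] q Q by auto
    ultimately show "Delta g q T - r (\<pi> q) \<le> Nab g k q T" by linarith
  qed
  moreover have "(\<Sum>q\<in>Q - T. r (\<pi> q)) = (\<Sum>y\<in>\<pi> ` (Q - T). r y)"
    using sum.reindex[OF \<pi>(2), of r] by simp
  moreover have "(\<Sum>y\<in>\<pi> ` (Q - T). r y) \<le> (\<Sum>y\<in>T. r y)"
    using T \<pi> trimmed unfolding r_def by (intro sum_mono2) auto
  moreover have "(\<Sum>y\<in>T. r y) \<le> g T - g {}"
    unfolding r_def by (rule sum_removal_gains_le[OF sub T(1,2)])
  ultimately show ?thesis by (simp add: sum_subtractf)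
qed

lemma sum_Nab_ge:
  assumes sub: "submodular_on U g" and T: "finite T" "T \<subseteq> U" "card T \<le> k"
    and Q: "finite Q" "Q \<subseteq> U" "card Q \<le> k"
    and nonneg: "\<And>A. A \<subseteq> U \<Longrightarrow> g A \<ge> 0"
    and trimmed: "\<And>y. y \<in> T \<Longrightarrow> g T - g (T - {y}) \<ge> 0"
  shows "(\<Sum>q\<in>Q. Nab g k q T) \<ge> g (Q \<union> T) - 2 * g T"
proof -
  have "(\<Sum>q\<in>Q - T. Nab g k q T) \<le> (\<Sum>q\<in>Q. Nab g k q T)"
    using Q T Nab_nonneg by (intro sum_mono2) auto
  moreover have "g (Q \<union> T) - g T \<le> (\<Sum>q\<in>Q - T. Delta g q T)"
    using union_gain_le_sum_gains[OF sub Q(1,2) T(2)] by (simp add: Delta_def)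
  moreover have "g T \<ge> 0" "g {} \<ge> 0" using nonneg T by auto
  moreover have "(\<Sum>q\<in>Q - T. Nab g k q T) \<ge> (\<Sum>q\<in>Q - T. Delta g q T) - g T"
  proof (cases "card T < k")
    case True
    then have "(\<Sum>q\<in>Q - T. Delta g q T) \<le> (\<Sum>q\<in>Q - T. Nab g k q T)"
      using Nab_ge_Delta[OF T(1)] by (intro sum_mono) auto
    then show ?thesis using \<open>g T \<ge> 0\<close> by linarith
  next
    case False
    then show ?thesis
      using sum_Nab_ge_full[OF sub T(1,2) _ Q trimmed] T(3) \<open>g {} \<ge> 0\<close> by simp
  qed
  ultimately show ?thesis by linarith
qed

lemma Nab_le:
  assumes "finite A" "c \<ge> 0" "\<And>y. y \<in> A \<Longrightarrow> Nab2 g x y A \<le> c"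
    "card A < k \<Longrightarrow> Delta g x A \<le> c"
  shows "Nab g k x A \<le> c"
proof -
  have "Max ({0, Delta g x A} \<union> (\<lambda>y. Nab2 g x y A) ` A) \<le> c" if "card A < k"
    using assms that by (intro Max.boundedI) auto
  moreover have "Max ({0} \<union> (\<lambda>y. Nab2 g x y A) ` A) \<le> c"
    using assms by (intro Max.boundedI) auto
  ultimately show ?thesis using assms(2) by (simp add: Nab_def)
qed

lemma Nab_eq_Delta:
  assumes fin: "finite T" and x: "x \<notin> T" and pos: "Nab g k x T > 0"
    and add: "card T < k \<and> (T = {} \<or> Max ((\<lambda>y. Nab2 g x y T) ` T) < Delta g x T)"
  shows "Nab g k x T = Delta g x T"
proof -
  have "Nab2 g x y T \<le> Delta g x T" if y: "y \<in> T" for y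
  proof -
    have "Nab2 g x y T \<le> Max ((\<lambda>y. Nab2 g x y T) ` T)" using fin y by (intro Max_ge) auto
    moreover have "Max ((\<lambda>y. Nab2 g x y T) ` T) < Delta g x T" using add y by auto
    ultimately show ?thesis by linarith
  qed
  then have "Nab g k x T \<le> max 0 (Delta g x T)"
    using fin by (intro Nab_le) (auto simp: le_max_iff_disj)
  then show ?thesis
    using Nab_ge_Delta[OF fin x, of k g] add pos by (auto simp: max_def split: if_splits)
qed

lemma Nab_eq_Nab2_choice:
  assumes fin: "finite T" and x: "x \<notin> T" and pos: "Nab g k x T > 0" and ch: "valid_argmax_choice g ch"
    and ne: "T \<noteq> {}" and swap: "\<not> (card T < k \<and> Max ((\<lambda>y. Nab2 g x y T) ` T) < Delta g x T)"
  shows "Nab g k x T = Nab2 g x (ch x T) T"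
proof -
  let ?y = "ch x T"
  have y: "?y \<in> T" "\<And>z. z \<in> T \<Longrightarrow> Nab2 g x z T \<le> Nab2 g x ?y T"
    using ch fin ne unfolding valid_argmax_choice_def by blast+
  then have "Max ((\<lambda>y. Nab2 g x y T) ` T) = Nab2 g x ?y T"
    using fin by (intro Max_eqI) auto
  then have "Nab g k x T \<le> max 0 (Nab2 g x ?y T)"
    using fin y swap by (intro Nab_le) (auto simp: le_max_iff_disj)
  then show ?thesis
    using Nab_ge_Nab2[OF fin x y(1), of g k] pos by (auto simp: max_def split: if_splits)
qed

lemma Rep_swap:
  assumes fin: "finite T" and pos: "Nab g k x T > 0" and ch: "valid_argmax_choice g ch"
    and k: "k \<ge> 1" and card: "card T \<le> k"
  shows "g (insert x (T - Rep g k ch x T)) = g T + Nab g k x T"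
    and "card (insert x (T - Rep g k ch x T)) \<le> k"
proof -
  have x: "x \<notin> T" using pos by (auto simp: Nab_def)
  have "g (insert x (T - Rep g k ch x T)) = g T + Nab g k x T \<and>
        card (insert x (T - Rep g k ch x T)) \<le> k"
  proof (cases "card T < k \<and> (T = {} \<or> Max ((\<lambda>y. Nab2 g x y T) ` T) < Delta g x T)")
    case True
    then show ?thesis
      using Nab_eq_Delta[OF fin x pos True] pos fin x by (simp add: Rep_def Delta_def)
  next
    case False
    have ne: "T \<noteq> {}" using False k card by auto
    with ch fin have y: "ch x T \<in> T" unfolding valid_argmax_choice_def by blast
    have "card T > 0" using fin y card_gt_0_iff by blast
    then have "card (insert x (T - {ch x T})) = card T" using fin x y by simp
    moreover have "\<not> (card T < k \<and> Max ((\<lambda>y. Nab2 g x y T) ` T) < Delta g x T)"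
      using False by auto
    moreover have "Rep g k ch x T = {ch x T}" using False pos by (simp add: Rep_def)
    ultimately show ?thesis
      using Nab_eq_Nab2_choice[OF fin x pos ch ne] card by (simp add: Nab2_def)
  qed
  then show "g (insert x (T - Rep g k ch x T)) = g T + Nab g k x T"
    and "card (insert x (T - Rep g k ch x T)) \<le> k" by simp_all
qed

section \<open>Trimming\<close>

definition Trim_step :: "('b set \<Rightarrow> real) \<Rightarrow> 'b set \<Rightarrow> 'b set \<Rightarrow> 'b \<Rightarrow> 'b set" where
  "Trim_step g B A x = (if x \<in> B \<and> x \<in> A \<and> g A - g (A - {x}) < 0 then A - {x} else A)"

lemma Trim_eq_foldl: "Trim g ord B = foldl (Trim_step g B) B ord"
  by (simp add: Trim_def Trim_step_def [abs_def])

lemma foldl_Trim_step_subset: "foldl (Trim_step g B) A xs \<subseteq> A"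
proof (induction xs arbitrary: A)
  case Nil
  then show ?case by simp
next
  case (Cons a xs)
  have "Trim_step g B A a \<subseteq> A" by (auto simp: Trim_step_def)
  then show ?case using Cons[of "Trim_step g B A a"] by simp
qed

lemma foldl_Trim_step_ge: "g (foldl (Trim_step g B) A xs) \<ge> g A"
proof (induction xs arbitrary: A)
  case Nil
  then show ?case by simp
next
  case (Cons a xs)
  have "g (Trim_step g B A a) \<ge> g A" by (auto simp: Trim_step_def)
  then show ?case using Cons[of "Trim_step g B A a"] by simp
qed

text \<open>
  Invariant of the pass: removal gains are nonnegative at every element already visited, since
  removing an element can only increase the removal gains of the others.
\<close>
lemma foldl_Trim_step_removal_gains:
  assumes sub: "submodular_on U g" and BU: "B \<subseteq> U"
  shows "A \<subseteq> B \<Longrightarrow> set xs \<inter> P = {} \<Longrightarrow> distinct xs \<Longrightarrow>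
    (\<forall>y \<in> A \<inter> P. g A - g (A - {y}) \<ge> 0) \<Longrightarrow>
    \<forall>y \<in> foldl (Trim_step g B) A xs \<inter> (P \<union> set xs).
      g (foldl (Trim_step g B) A xs) - g (foldl (Trim_step g B) A xs - {y}) \<ge> 0"
proof (induction xs arbitrary: A P)
  case Nil
  then show ?case by simp
next
  case (Cons x xs)
  define A' where "A' = Trim_step g B A x"
  have A'B: "A' \<subseteq> B" using Cons.prems by (auto simp: A'_def Trim_step_def)
  have gains: "\<forall>y \<in> A' \<inter> insert x P. g A' - g (A' - {y}) \<ge> 0"
  proof
    fix y assume y: "y \<in> A' \<inter> insert x P"
    show "g A' - g (A' - {y}) \<ge> 0"
    proof (cases "x \<in> B \<and> x \<in> A \<and> g A - g (A - {x}) < 0")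
      case True
      then have A': "A' = A - {x}" by (simp add: A'_def Trim_step_def)
      then have "y \<in> A \<inter> P" using y by auto
      then have "g A - g (A - {y}) \<ge> 0" using Cons.prems(4) by blast
      moreover have "g A - g (A - {y}) \<le> g A' - g (A' - {y})"
        using removal_gain_antimono[OF sub, of A' A y] A' y Cons.prems(1) BU by auto
      ultimately show ?thesis by linarith
    next
      case False
      then have "A' = A" unfolding A'_def Trim_step_def by auto
      then show ?thesis using False y Cons.prems(1,4) by auto
    qed
  qed
  have "set xs \<inter> insert x P = {}" "distinct xs" using Cons.prems by auto
  from Cons.IH[OF A'B this gains] show ?case
    by (simp add: A'_def Un_commute insert_commute)
qed

lemma Trim_subset: "Trim g ord B \<subseteq> B"
  unfolding Trim_eq_foldl by (rule foldl_Trim_step_subset)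

lemma Trim_ge: "g (Trim g ord B) \<ge> g B"
  unfolding Trim_eq_foldl by (rule foldl_Trim_step_ge)

lemma Trim_removal_gain_nonneg:
  assumes "submodular_on U g" "B \<subseteq> U" "distinct ord" "B \<subseteq> set ord" "y \<in> Trim g ord B"
  shows "g (Trim g ord B) - g (Trim g ord B - {y}) \<ge> 0"
  using foldl_Trim_step_removal_gains[OF assms(1,2), of B ord "{}"] assms(3-5) Trim_subset[of g ord B]
  unfolding Trim_eq_foldl by auto

section \<open>Expectations over finite distributions\<close>

lemma expectation_mono_finite:
  fixes f g :: "'b \<Rightarrow> real"
  assumes "finite (set_pmf p)" "\<And>x. x \<in> set_pmf p \<Longrightarrow> f x \<le> g x"
  shows "measure_pmf.expectation p f \<le> measure_pmf.expectation p g"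
  using assms by (intro integral_mono_AE integrable_measure_pmf_finite) (auto simp: AE_measure_pmf_iff)

lemma expectation_sum_finite:
  fixes f :: "'c \<Rightarrow> 'b \<Rightarrow> real"
  assumes "finite (set_pmf p)"
  shows "measure_pmf.expectation p (\<lambda>x. \<Sum>i\<in>I. f i x) = (\<Sum>i\<in>I. measure_pmf.expectation p (f i))"
  using assms by (intro Bochner_Integration.integral_sum integrable_measure_pmf_finite)

lemma expectation_add_finite:
  fixes f g :: "'b \<Rightarrow> real"
  assumes "finite (set_pmf p)"
  shows "measure_pmf.expectation p (\<lambda>x. f x + g x) =
    measure_pmf.expectation p f + measure_pmf.expectation p g"
  using assms by (intro Bochner_Integration.integral_add integrable_measure_pmf_finite)

lemma expectation_nonneg:
  fixes f :: "'b \<Rightarrow> real"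
  assumes "\<And>x. x \<in> set_pmf p \<Longrightarrow> f x \<ge> 0"
  shows "measure_pmf.expectation p f \<ge> 0"
  using assms by (intro integral_nonneg_AE) (auto simp: AE_measure_pmf_iff)

lemma expectation_bind_finite:
  fixes h :: "'b \<Rightarrow> real"
  assumes "finite (set_pmf p)" "\<And>x. x \<in> set_pmf p \<Longrightarrow> finite (set_pmf (f x))"
  shows "measure_pmf.expectation (bind_pmf p f) h =
    measure_pmf.expectation p (\<lambda>x. measure_pmf.expectation (f x) h)"
  using assms by (simp add: pmf_expectation_bind[of "set_pmf p"] integral_measure_pmf[of "set_pmf p"])

section \<open>The sampling lemma\<close>

lemma sum_weighted_increments_ge:
  fixes r H :: "nat \<Rightarrow> real"
  assumes "\<And>i j. i \<le> j \<Longrightarrow> j \<le> n \<Longrightarrow> r j \<le> r i" and "\<And>j. H j \<ge> 0"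
  shows "(\<Sum>j<Suc n. r j * (H (Suc j) - H j)) \<ge> r n * H (Suc n) - r 0 * H 0"
  using assms(1)
proof (induction n)
  case 0
  then show ?case by (simp add: algebra_simps)
next
  case (Suc n)
  have "(r n - r (Suc n)) * H (Suc n) \<ge> 0"
    using Suc.prems[of n "Suc n"] assms(2)[of "Suc n"] by simp
  then show ?case using Suc by (simp add: algebra_simps)
qed

lemma expectation_ge_weighted_increments:
  fixes D :: "'b set pmf" and h :: "'b set \<Rightarrow> real"
  assumes fD: "finite (set_pmf D)" and DU: "\<And>A. A \<in> set_pmf D \<Longrightarrow> A \<subseteq> U"
    and sub: "submodular_on U h" and ys: "set ys = U" "distinct ys"
  shows "measure_pmf.expectation D h \<ge> h {} + (\<Sum>i<length ys.
      measure_pmf.expectation D (\<lambda>A. if ys ! i \<in> A then 1 else 0) *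
      (h (set (take (Suc i) ys)) - h (set (take i ys))))"
proof -
  define w where "w i A = (if ys ! i \<in> A then 1 else 0) *
      (h (set (take (Suc i) ys)) - h (set (take i ys)))" for i and A :: "'b set"
  have "h {} + (\<Sum>i<length ys. w i A) \<le> h A" if "A \<in> set_pmf D" for A
    using submodular_on_inter_prefix_ge[OF sub ys(2) _ order_refl, of A] ys DU[OF that]
    unfolding w_def by (simp add: Int_absorb2)
  then have "measure_pmf.expectation D (\<lambda>A. h {} + (\<Sum>i<length ys. w i A)) \<le>
      measure_pmf.expectation D h"
    by (rule expectation_mono_finite[OF fD])
  then show ?thesis
    by (simp add: expectation_add_finite[OF fD] expectation_sum_finite[OF fD] w_def
        integral_mult_left_zero)
qed

text \<open>
  Enumerating \<open>U\<close> by decreasing inclusion probability makes the weights of the increments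
  decrease, so summation by parts applies.
\<close>
lemma submodular_sampling_bound:
  fixes D :: "'b set pmf" and h :: "'b set \<Rightarrow> real"
  assumes fU: "finite U" and fD: "finite (set_pmf D)" and DU: "\<And>A. A \<in> set_pmf D \<Longrightarrow> A \<subseteq> U"
    and sub: "submodular_on U h" and nonneg: "\<And>A. A \<subseteq> U \<Longrightarrow> h A \<ge> 0"
    and prob: "\<And>u. u \<in> U \<Longrightarrow> measure_pmf.expectation D (\<lambda>A. if u \<in> A then 1 else 0) \<le> p"
    and p: "p \<ge> 0"
  shows "measure_pmf.expectation D h \<ge> (1 - p) * h {}"
proof -
  define q where "q u = measure_pmf.expectation D (\<lambda>A. if u \<in> A then 1 else (0::real))" for u
  obtain xs where xs: "set xs = U" "distinct xs" using finite_distinct_list[OF fU] by blast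
  define ys where "ys = sort_key (\<lambda>u. - q u) xs"
  have ys: "set ys = U" "distinct ys" "sorted (map (\<lambda>u. - q u) ys)"
    unfolding ys_def using xs by (simp_all add: distinct_sort sorted_sort_key)
  define H where "H j = h (set (take j ys))" for j
  define r where "r j = q (ys ! j)" for j
  have H: "H j \<ge> 0" for j
    using set_take_subset[of j ys] ys(1) nonneg unfolding H_def by blast
  have r: "r j \<ge> 0" for j
    unfolding r_def q_def by (rule expectation_nonneg) simp
  have E: "measure_pmf.expectation D h \<ge> h {} + (\<Sum>i<length ys. r i * (H (Suc i) - H i))"
    using expectation_ge_weighted_increments[OF fD DU sub ys(1,2)] unfolding r_def q_def H_def .
  have H0: "H 0 = h {}" by (simp add: H_def)
  show ?thesis
  proof (cases "length ys")
    case 0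
    moreover have "p * h {} \<ge> 0" using p nonneg[of "{}"] by simp
    ultimately show ?thesis using E by (simp add: algebra_simps)
  next
    case (Suc n)
    have "r j \<le> r i" if "i \<le> j" "j \<le> n" for i j
      using sorted_nth_mono[OF ys(3), of i j] that Suc unfolding r_def by simp
    from sum_weighted_increments_ge[of n r H, OF this H]
    have "(\<Sum>i<length ys. r i * (H (Suc i) - H i)) \<ge> - r 0 * H 0"
      using Suc mult_nonneg_nonneg[OF r[of n] H[of "Suc n"]] by simp
    moreover have "ys ! 0 \<in> U" using ys(1) Suc nth_mem[of 0 ys] by simp
    then have "r 0 \<le> p" using prob unfolding r_def q_def by simp
    then have "r 0 * H 0 \<le> p * H 0" using H[of 0] by (rule mult_right_mono)
    moreover have "(1 - p) * h {} = h {} - p * H 0" using H0 by (simp add: algebra_simps)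
    ultimately show ?thesis using E by linarith
  qed
qed

section \<open>The numerical bound\<close>

lemma exp_one_ge: "exp (1::real) \<ge> 5/2"
  using exp_lower_Taylor_quadratic[of "1::real"] by simp

lemma one_minus_inverse_power_ge:
  assumes "l \<ge> (2::nat)"
  shows "(1 - 1 / real l) ^ (l - 1) \<ge> exp (-1)"
proof -
  define a where "a = 1 - 1 / real l"
  have l: "real l \<ge> 2" using assms by simp
  have a: "a \<ge> 0" using l unfolding a_def by (simp add: field_simps)
  have "a * (1 + 1 / (real l - 1)) = 1" using l unfolding a_def by (simp add: field_simps)
  then have "1 \<le> a * exp (1 / (real l - 1))"
    using mult_left_mono[OF exp_ge_add_one_self[of "1 / (real l - 1)"] a] by linarith
  then have "exp (- (1 / (real l - 1))) \<le> a" by (simp add: exp_minus field_simps)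
  then have "exp (- (1 / (real l - 1))) ^ (l - 1) \<le> a ^ (l - 1)" by (intro power_mono) auto
  also have "exp (- (1 / (real l - 1))) ^ (l - 1) = exp (real (l - 1) * (- (1 / (real l - 1))))"
    by (simp only: exp_of_nat_mult)
  also have "real (l - 1) * (- (1 / (real l - 1))) = -1" using l by (simp add: of_nat_diff field_simps)
  finally show ?thesis unfolding a_def .
qed

lemma one_minus_two_inverse_power_le:
  assumes "l \<ge> (2::nat)"
  shows "(1 - 2 / real l) ^ l \<le> exp (-2)"
proof -
  have l: "real l \<ge> 2" using assms by simp
  have "1 - 2 / real l \<le> exp (-2 / real l)" using exp_ge_add_one_self[of "-2 / real l"] by simp
  then have "(1 - 2 / real l) ^ l \<le> exp (-2 / real l) ^ l"
    using l by (intro power_mono) (auto simp: field_simps)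
  also have "exp (-2 / real l) ^ l = exp (real l * (-2 / real l))" by (simp only: exp_of_nat_mult)
  also have "real l * (-2 / real l) = -2" using l by simp
  finally show ?thesis .
qed

lemma power_gap_ge:
  assumes "l \<ge> (2::nat)"
  shows "(1 - 1 / real l) ^ l - (1 - 2 / real l) ^ l \<ge> 1 / (2 * exp 1)"
proof (cases "l \<le> 9")
  case True
  then have "l = 2 \<or> l = 3 \<or> l = 4 \<or> l = 5 \<or> l = 6 \<or> l = 7 \<or> l = 8 \<or> l = 9" using assms by auto
  then have "(1 - 1 / real l) ^ l - (1 - 2 / real l) ^ l \<ge> 1/5"
    by (elim disjE) (simp_all add: power_divide)
  moreover have "1 / (2 * exp (1::real)) \<le> 1/5" using exp_one_ge by (simp add: field_simps)
  ultimately show ?thesis by linarith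
next
  case False
  define a where "a = 1 - 1 / real l"
  have a: "a \<ge> 9/10" using False unfolding a_def by (simp add: field_simps)
  have "l = Suc (l - 1)" using assms by simp
  then have "a ^ l = a * a ^ (l - 1)" by (metis power_Suc)
  then have "a ^ l \<ge> a * exp (-1)"
    using one_minus_inverse_power_ge[OF assms] a unfolding a_def by (simp add: mult_left_mono)
  moreover have "exp (-2::real) = exp (-1) * exp (-1)" by (simp flip: exp_add)
  then have "a * exp (-1) - exp (-2) = exp (-1) * (a - exp (-1::real))" by (simp add: algebra_simps)
  moreover have "exp (-1::real) \<le> 2/5" using exp_one_ge by (simp add: exp_minus field_simps)
  then have "exp (-1) * (1/2) \<le> exp (-1) * (a - exp (-1::real))"
    using a by (intro mult_left_mono) auto
  ultimately have "a ^ l - (1 - 2 / real l) ^ l \<ge> exp (-1) / 2"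
    using one_minus_two_inverse_power_le[OF assms] by linarith
  moreover have "exp (-1) / 2 = 1 / (2 * exp (1::real))" by (simp add: exp_minus inverse_eq_divide)
  ultimately show ?thesis unfolding a_def by simp
qed

section \<open>Analysis of Sampling-Greedy\<close>

type_synonym 'a sg_state = "('a + nat) set \<times> (nat \<Rightarrow> ('a + nat) set)"

text \<open>
  The bound is proved against \<open>\<Sum>\<^sub>i f\<^sub>i(Oi i)\<close> for any \<open>Oi i \<subseteq> Opt\<close> of size at most \<open>k\<close>;
  choosing \<open>Oi i\<close> to attain the inner maxima turns this sum into \<open>F(Opt)\<close>.
\<close>
locale sampling_greedy_analysis =
  fixes \<Omega> :: "'a set" and f :: "nat \<Rightarrow> 'a set \<Rightarrow> real" and m k l :: nat
    and selM :: "('a + nat) set \<Rightarrow> (nat \<Rightarrow> ('a + nat) set) \<Rightarrow> ('a + nat) set"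
    and ch :: "nat \<Rightarrow> ('a + nat) \<Rightarrow> ('a + nat) set \<Rightarrow> ('a + nat)"
    and ord :: "('a + nat) list" and Opt :: "'a set" and Oi :: "nat \<Rightarrow> 'a set"
  assumes finite_\<Omega>: "finite \<Omega>" and k_pos: "k \<ge> 1" and l_pos: "l \<ge> 1"
    and f_nonneg: "\<And>i A. i < m \<Longrightarrow> A \<subseteq> \<Omega> \<Longrightarrow> f i A \<ge> 0"
    and f_submodular: "\<And>i. i < m \<Longrightarrow> submodular_on \<Omega> (f i)"
    and selM_valid: "valid_selM f m k l \<Omega> selM"
    and ch_valid: "\<And>i. i < m \<Longrightarrow> valid_argmax_choice (ext_fun (f i)) (ch i)"
    and ord_distinct: "distinct ord" and ord_set: "set ord = ext_ground \<Omega> l"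
    and Opt_subset: "Opt \<subseteq> \<Omega>" and Opt_card: "card Opt \<le> l"
    and Oi_subset: "\<And>i. Oi i \<subseteq> Opt" and Oi_card: "\<And>i. card (Oi i) \<le> k"
begin

abbreviation "\<Omega>' \<equiv> ext_ground \<Omega> l"
abbreviation "f' i \<equiv> ext_fun (f i)"
abbreviation "round_step \<equiv> sg_step f m k selM ch ord"
abbreviation "round_update x st \<equiv> sg_update f m k ch ord x st"
abbreviation "potential st \<equiv> (\<Sum>i<m. f' i (snd st i))"
abbreviation "augmented_value i st \<equiv> f' i (Inl ` Oi i \<union> snd st i)"
abbreviation "state_distr t \<equiv> ((\<lambda>p. bind_pmf p round_step) ^^ t) (return_pmf ({}, (\<lambda>_. {})))"
abbreviation "OPT \<equiv> (\<Sum>i<m. f i (Oi i))"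

definition state_inv :: "'a sg_state \<Rightarrow> bool" where
  "state_inv st \<longleftrightarrow> finite (fst st) \<and> fst st \<subseteq> \<Omega>' \<and>
     (\<forall>i<m. snd st i \<subseteq> fst st \<and> card (snd st i) \<le> k \<and>
        (\<forall>y\<in>snd st i. f' i (snd st i) - f' i (snd st i - {y}) \<ge> 0))"

lemma finite_\<Omega>': "finite \<Omega>'"
  using finite_\<Omega> by (simp add: ext_ground_def)

lemma f'_submodular: "i < m \<Longrightarrow> submodular_on \<Omega>' (f' i)"
  using f_submodular submodular_on_ext_fun by blast

lemma f'_nonneg: "i < m \<Longrightarrow> A \<subseteq> \<Omega>' \<Longrightarrow> f' i A \<ge> 0"
  using f_nonneg[of i "Inl -` A"] by (auto simp: ext_fun_def ext_ground_def)

lemma selM_subset: "selM S T \<subseteq> \<Omega>'"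
  and selM_card: "card (selM S T) = l"
  using selM_valid by (auto simp: valid_selM_def)

lemma selM_finite: "finite (selM S T)"
  using selM_subset finite_\<Omega>' by (rule finite_subset)

lemma selM_nonempty: "selM S T \<noteq> {}"
  using selM_card[of S T] l_pos by auto

lemma OPT_nonneg: "OPT \<ge> 0"
  using f_nonneg Oi_subset Opt_subset by (intro sum_nonneg) blast

lemma state_inv_finite:
  assumes "state_inv st" "i < m"
  shows "finite (snd st i)"
proof -
  have "snd st i \<subseteq> fst st" "finite (fst st)" using assms by (auto simp: state_inv_def)
  then show ?thesis by (rule finite_subset)
qed

lemma swap_set:
  assumes I: "state_inv st" and x: "x \<in> \<Omega>'" and i: "i < m"
    and pos: "Nab (f' i) k x (snd st i) > 0"
  defines "B \<equiv> insert x (snd st i - Rep (f' i) k (ch i) x (snd st i))"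
  shows "B \<subseteq> insert x (fst st)" and "B \<subseteq> \<Omega>'" and "card B \<le> k"
    and "f' i B = f' i (snd st i) + Nab (f' i) k x (snd st i)"
proof -
  have T: "snd st i \<subseteq> fst st" "card (snd st i) \<le> k" "fst st \<subseteq> \<Omega>'"
    using I i by (auto simp: state_inv_def)
  note swap = Rep_swap[OF state_inv_finite[OF I i] pos ch_valid[OF i] k_pos T(2)]
  show "B \<subseteq> insert x (fst st)" "B \<subseteq> \<Omega>'" using T x by (auto simp: B_def)
  show "card B \<le> k" "f' i B = f' i (snd st i) + Nab (f' i) k x (snd st i)"
    using swap by (simp_all add: B_def)
qed

lemma state_inv_update:
  assumes I: "state_inv st" and x: "x \<in> \<Omega>'"
  shows "state_inv (round_update x st)"
proof -
  have "snd (round_update x st) i \<subseteq> insert x (fst st) \<and> card (snd (round_update x st) i) \<le> k \<and>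
      (\<forall>y\<in>snd (round_update x st) i.
         f' i (snd (round_update x st) i) - f' i (snd (round_update x st) i - {y}) \<ge> 0)"
    if i: "i < m" for i
  proof (cases "Nab (f' i) k x (snd st i) > 0")
    case True
    define B where "B = insert x (snd st i - Rep (f' i) k (ch i) x (snd st i))"
    note B = swap_set[OF I x i True, folded B_def]
    have upd: "snd (round_update x st) i = Trim (f' i) ord B"
      using True i by (simp add: sg_update_def B_def)
    have "card (Trim (f' i) ord B) \<le> card B"
      using finite_subset[OF B(2) finite_\<Omega>'] Trim_subset by (rule card_mono)
    moreover have "B \<subseteq> set ord" using B(2) ord_set by simp
    note gains = Trim_removal_gain_nonneg[OF f'_submodular[OF i] B(2) ord_distinct this]
    ultimately show ?thesis using upd B(1,3) Trim_subset[of "f' i" ord B] gains by auto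
  next
    case False
    then show ?thesis using I i by (auto simp: sg_update_def state_inv_def)
  qed
  then show ?thesis using I x by (auto simp: state_inv_def sg_update_def)
qed

lemma potential_update_ge:
  assumes I: "state_inv st" and x: "x \<in> \<Omega>'"
  shows "potential (round_update x st) \<ge> potential st + (\<Sum>i<m. Nab (f' i) k x (snd st i))"
proof -
  have "f' i (snd st i) + Nab (f' i) k x (snd st i) \<le> f' i (snd (round_update x st) i)"
    if i: "i < m" for i
  proof (cases "Nab (f' i) k x (snd st i) > 0")
    case True
    define B where "B = insert x (snd st i - Rep (f' i) k (ch i) x (snd st i))"
    have "snd (round_update x st) i = Trim (f' i) ord B"
      using True i by (simp add: sg_update_def B_def)
    then show ?thesis
      using swap_set(4)[OF I x i True, folded B_def] Trim_ge[where g = "f' i" and ord = ord and B = B] by simp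
  next
    case False
    then show ?thesis
      using Nab_nonneg[OF state_inv_finite[OF I i], of "f' i" k x] by (simp add: sg_update_def)
  qed
  then have "(\<Sum>i<m. f' i (snd st i) + Nab (f' i) k x (snd st i)) \<le> potential (round_update x st)"
    by (intro sum_mono) auto
  then show ?thesis by (simp add: sum.distrib)
qed

lemma set_pmf_round_step: "set_pmf (round_step st) = (\<lambda>x. round_update x st) ` selM (fst st) (snd st)"
  using selM_finite selM_nonempty by (simp add: sg_step_def)

lemma finite_set_pmf_round_step: "finite (set_pmf (round_step st))"
  using selM_finite by (simp add: set_pmf_round_step)

lemma expectation_round_step:
  "measure_pmf.expectation (round_step st) h =
     (\<Sum>x\<in>selM (fst st) (snd st). h (round_update x st)) / real l"
  using selM_finite selM_nonempty selM_card by (simp add: sg_step_def integral_pmf_of_set)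

text \<open>\<open>Opt\<close> padded with dummy items to exactly \<open>l\<close> items: a competitor for the choice of \<open>M\<close>.\<close>
lemma padded_Opt: "\<exists>O'. O' \<subseteq> \<Omega>' \<and> card O' = l \<and> Inl ` Opt \<subseteq> O'"
proof -
  define O' where "O' = Inl ` Opt \<union> Inr ` {..< l - card Opt}"
  have "finite Opt" using Opt_subset finite_\<Omega> finite_subset by blast
  then have "card O' = card Opt + (l - card Opt)"
    unfolding O'_def by (subst card_Un_disjoint) (auto simp: card_image)
  then have "card O' = l" using Opt_card by simp
  moreover have "O' \<subseteq> \<Omega>'" using Opt_subset by (auto simp: O'_def ext_ground_def)
  ultimately show ?thesis unfolding O'_def by blast
qed

lemma score_selM_ge:
  assumes I: "state_inv st"
  shows "score f m k (snd st) (selM (fst st) (snd st)) \<ge>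
    (\<Sum>i<m. augmented_value i st - 2 * f' i (snd st i))"
proof -
  obtain O' where O': "O' \<subseteq> \<Omega>'" "card O' = l" "Inl ` Opt \<subseteq> O'" using padded_Opt by blast
  have "augmented_value i st - 2 * f' i (snd st i) \<le> (\<Sum>x\<in>O'. Nab (f' i) k x (snd st i))"
    if i: "i < m" for i
  proof -
    have T: "finite (snd st i)" "snd st i \<subseteq> \<Omega>'" "card (snd st i) \<le> k"
      "\<And>y. y \<in> snd st i \<Longrightarrow> f' i (snd st i) - f' i (snd st i - {y}) \<ge> 0"
      using I i state_inv_finite[OF I i] by (auto simp: state_inv_def)
    have "finite (Oi i)" using finite_subset[OF subset_trans[OF Oi_subset Opt_subset] finite_\<Omega>] .
    then have Q: "finite (Inl ` Oi i)" "Inl ` Oi i \<subseteq> \<Omega>'" "card (Inl ` Oi i) \<le> k"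
      using Oi_subset[of i] Opt_subset Oi_card[of i] by (auto simp: card_image ext_ground_def)
    have "(\<Sum>x\<in>Inl ` Oi i. Nab (f' i) k x (snd st i)) \<le> (\<Sum>x\<in>O'. Nab (f' i) k x (snd st i))"
      using O' Oi_subset[of i] finite_subset[OF O'(1) finite_\<Omega>'] Nab_nonneg[OF T(1)]
      by (intro sum_mono2) auto
    with sum_Nab_ge[OF f'_submodular[OF i] T(1-3) Q f'_nonneg[OF i] T(4)] show ?thesis
      by linarith
  qed
  then have "(\<Sum>i<m. augmented_value i st - 2 * f' i (snd st i)) \<le>
      (\<Sum>i<m. \<Sum>x\<in>O'. Nab (f' i) k x (snd st i))" by (intro sum_mono) auto
  also have "\<dots> = score f m k (snd st) O'" unfolding score_def by (rule sum.swap)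
  also have "\<dots> \<le> score f m k (snd st) (selM (fst st) (snd st))"
    using selM_valid O' by (auto simp: valid_selM_def)
  finally show ?thesis .
qed

lemma expectation_potential_step_ge:
  assumes I: "state_inv st"
  shows "measure_pmf.expectation (round_step st) potential \<ge>
    potential st + score f m k (snd st) (selM (fst st) (snd st)) / real l"
proof -
  let ?M = "selM (fst st) (snd st)"
  have "(\<Sum>x\<in>?M. potential st + (\<Sum>i<m. Nab (f' i) k x (snd st i))) \<le>
      (\<Sum>x\<in>?M. potential (round_update x st))"
    using potential_update_ge[OF I] selM_subset by (intro sum_mono) blast
  moreover have "(\<Sum>x\<in>?M. potential st + (\<Sum>i<m. Nab (f' i) k x (snd st i))) =
      real l * potential st + score f m k (snd st) ?M"
    unfolding score_def by (simp add: sum.distrib selM_card)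
  ultimately have "(real l * potential st + score f m k (snd st) ?M) / real l \<le>
      (\<Sum>x\<in>?M. potential (round_update x st)) / real l" by (simp add: divide_right_mono)
  moreover have "(real l * potential st + score f m k (snd st) ?M) / real l =
      potential st + score f m k (snd st) ?M / real l"
    using l_pos by (simp add: field_simps)
  ultimately show ?thesis by (simp add: expectation_round_step)
qed

lemma expectation_potential_step_recurrence:
  assumes I: "state_inv st"
  shows "measure_pmf.expectation (round_step st) potential \<ge>
    (1 - 2 / real l) * potential st + (1 / real l) * (\<Sum>i<m. augmented_value i st)"
proof -
  have "(\<Sum>i<m. augmented_value i st) - 2 * potential st \<le>
      score f m k (snd st) (selM (fst st) (snd st))"
    using score_selM_ge[OF I] by (simp add: sum_subtractf sum_distrib_left)
  then have "((\<Sum>i<m. augmented_value i st) - 2 * potential st) / real l \<le>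
      score f m k (snd st) (selM (fst st) (snd st)) / real l"
    by (simp add: divide_right_mono)
  moreover have "(1 - 2 / real l) * potential st + (1 / real l) * (\<Sum>i<m. augmented_value i st) =
      potential st + ((\<Sum>i<m. augmented_value i st) - 2 * potential st) / real l"
    using l_pos by (simp add: field_simps)
  ultimately show ?thesis using expectation_potential_step_ge[OF I] by linarith
qed

lemma expectation_potential_step_mono:
  assumes I: "state_inv st"
  shows "measure_pmf.expectation (round_step st) potential \<ge> potential st"
proof -
  have "score f m k (snd st) (selM (fst st) (snd st)) \<ge> 0"
    unfolding score_def by (intro sum_nonneg Nab_nonneg state_inv_finite[OF I]) auto
  then have "score f m k (snd st) (selM (fst st) (snd st)) / real l \<ge> 0" by simp
  then show ?thesis using expectation_potential_step_ge[OF I] by linarith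
qed

lemma expectation_indicator_step:
  "measure_pmf.expectation (round_step st) (\<lambda>s. if u \<in> fst s then 1 else 0)
      \<le> (1 - 1 / real l) * (if u \<in> fst st then 1 else 0) + 1 / real l"
proof -
  let ?M = "selM (fst st) (snd st)"
  have l: "real l > 0" using l_pos by simp
  have "(\<Sum>x\<in>?M. if u \<in> insert x (fst st) then 1 else 0 :: real) \<le>
      (if u \<in> fst st then real l else 1)"
  proof (cases "u \<in> fst st")
    case False
    then have "(\<Sum>x\<in>?M. if u \<in> insert x (fst st) then 1 else 0 :: real) = (if u \<in> ?M then 1 else 0)"
      using selM_finite by simp
    then show ?thesis using False by simp
  qed (simp add: selM_card)
  then have "(\<Sum>x\<in>?M. if u \<in> insert x (fst st) then 1 else 0 :: real) / real l \<le>
      (if u \<in> fst st then real l else 1) / real l"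
    by (simp add: divide_right_mono)
  moreover have "(if u \<in> fst st then real l else 1) / real l =
      (1 - 1 / real l) * (if u \<in> fst st then 1 else 0) + 1 / real l"
    using l by (simp add: field_simps)
  ultimately show ?thesis by (simp add: expectation_round_step sg_update_def)
qed

lemma state_distr_Suc: "state_distr (Suc t) = bind_pmf (state_distr t) round_step"
  by simp

lemma state_distr_support:
  "finite (set_pmf (state_distr t)) \<and> (\<forall>st\<in>set_pmf (state_distr t). state_inv st \<and> card (fst st) \<le> t)"
proof (induction t)
  case 0
  then show ?case by (simp add: state_inv_def)
next
  case (Suc t)
  have "state_inv st' \<and> card (fst st') \<le> Suc t" if mem: "st' \<in> set_pmf (state_distr (Suc t))" for st'
  proof -
    obtain st x where st: "st \<in> set_pmf (state_distr t)" and x: "x \<in> selM (fst st) (snd st)"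
      and st': "st' = round_update x st"
      using mem unfolding state_distr_Suc set_bind_pmf set_pmf_round_step by blast
    then have I: "state_inv st" and "card (fst st) \<le> t" using Suc by auto
    moreover have "finite (fst st)" using I by (simp add: state_inv_def)
    ultimately have "card (fst st') \<le> Suc t" using st' by (simp add: sg_update_def card_insert_if)
    moreover have "state_inv st'" using state_inv_update[OF I] selM_subset x st' by blast
    ultimately show ?thesis by simp
  qed
  moreover have "finite (set_pmf (state_distr (Suc t)))"
    using Suc finite_set_pmf_round_step by simp
  ultimately show ?case by blast
qed

lemma finite_set_pmf_state_distr: "finite (set_pmf (state_distr t))"
  and state_inv_state_distr: "st \<in> set_pmf (state_distr t) \<Longrightarrow> state_inv st"
  and card_state_distr: "st \<in> set_pmf (state_distr t) \<Longrightarrow> card (fst st) \<le> t"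
  using state_distr_support by blast+

lemma expectation_state_distr_Suc:
  fixes h :: "'a sg_state \<Rightarrow> real"
  shows "measure_pmf.expectation (state_distr (Suc t)) h =
    measure_pmf.expectation (state_distr t) (\<lambda>st. measure_pmf.expectation (round_step st) h)"
  unfolding state_distr_Suc
  by (rule expectation_bind_finite) (simp_all add: finite_set_pmf_state_distr finite_set_pmf_round_step)

lemma prob_selected_le:
  "measure_pmf.expectation (state_distr t) (\<lambda>s. if u \<in> fst s then 1 else 0) \<le> 1 - (1 - 1 / real l) ^ t"
proof (induction t)
  case 0
  then show ?case by simp
next
  case (Suc t)
  define a where "a = 1 - 1 / real l"
  have a: "a \<ge> 0" using l_pos by (simp add: a_def field_simps)
  note fin = finite_set_pmf_state_distr[of t]
  have "measure_pmf.expectation (state_distr (Suc t)) (\<lambda>s. if u \<in> fst s then 1 else 0) \<le>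
      measure_pmf.expectation (state_distr t) (\<lambda>st. a * (if u \<in> fst st then 1 else 0) + 1 / real l)"
    unfolding expectation_state_distr_Suc a_def
    by (rule expectation_mono_finite[OF fin]) (rule expectation_indicator_step)
  also have "\<dots> = a * measure_pmf.expectation (state_distr t) (\<lambda>st. if u \<in> fst st then 1 else 0) + 1 / real l"
    by (simp add: expectation_add_finite[OF fin])
  also have "\<dots> \<le> a * (1 - a ^ t) + 1 / real l"
    using Suc a unfolding a_def by (intro add_right_mono mult_left_mono) auto
  also have "\<dots> = 1 - a ^ Suc t" by (simp add: a_def algebra_simps)
  finally show ?case unfolding a_def .
qed

lemma expectation_augmented_value_ge:
  assumes i: "i < m"
  shows "measure_pmf.expectation (state_distr t) (augmented_value i) \<ge> (1 - 1 / real l) ^ t * f i (Oi i)"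
proof -
  define D where "D = map_pmf (\<lambda>st. snd st i) (state_distr t)"
  define h where "h X = f' i (Inl ` Oi i \<union> X)" for X
  define p where "p = 1 - (1 - 1 / real l) ^ t"
  have Q: "Inl ` Oi i \<subseteq> \<Omega>'" using Oi_subset Opt_subset by (auto simp: ext_ground_def)
  have D: "snd st i \<subseteq> fst st" "fst st \<subseteq> \<Omega>'" if "st \<in> set_pmf (state_distr t)" for st
    using state_inv_state_distr[OF that] i by (auto simp: state_inv_def)
  have "measure_pmf.expectation D h \<ge> (1 - p) * h {}"
  proof (rule submodular_sampling_bound[OF finite_\<Omega>'])
    show "finite (set_pmf D)" by (simp add: D_def finite_set_pmf_state_distr)
    show "A \<subseteq> \<Omega>'" if "A \<in> set_pmf D" for A
      using that D unfolding D_def set_map_pmf by blast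
    show "submodular_on \<Omega>' h" unfolding h_def by (rule submodular_on_union[OF f'_submodular[OF i] Q])
    show "h A \<ge> 0" if "A \<subseteq> \<Omega>'" for A unfolding h_def using f'_nonneg[OF i] Q that by auto
    show "p \<ge> 0" unfolding p_def using l_pos by (simp add: power_le_one)
    fix u
    have "measure_pmf.expectation D (\<lambda>A. if u \<in> A then 1 else 0 :: real) \<le>
        measure_pmf.expectation (state_distr t) (\<lambda>st. if u \<in> fst st then 1 else 0)"
      unfolding D_def integral_map_pmf
      by (rule expectation_mono_finite[OF finite_set_pmf_state_distr]) (use D in auto)
    also have "\<dots> \<le> p" unfolding p_def by (rule prob_selected_le)
    finally show "measure_pmf.expectation D (\<lambda>A. if u \<in> A then 1 else 0) \<le> p" .
  qed
  moreover have "h {} = f i (Oi i)" by (simp add: h_def ext_fun_def inj_vimage_image_eq)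
  ultimately show ?thesis by (simp add: D_def h_def p_def)
qed

lemma expectation_potential_recurrence:
  "measure_pmf.expectation (state_distr (Suc t)) potential \<ge>
     (1 - 2 / real l) * measure_pmf.expectation (state_distr t) potential +
     (1 / real l) * ((1 - 1 / real l) ^ t * OPT)"
proof -
  note fin = finite_set_pmf_state_distr[of t]
  have "(1 - 1 / real l) ^ t * OPT \<le>
      (\<Sum>i<m. measure_pmf.expectation (state_distr t) (augmented_value i))"
    unfolding sum_distrib_left using expectation_augmented_value_ge by (intro sum_mono) auto
  then have "(1 / real l) * ((1 - 1 / real l) ^ t * OPT) \<le>
      (1 / real l) * (\<Sum>i<m. measure_pmf.expectation (state_distr t) (augmented_value i))"
    by (rule mult_left_mono) simp
  moreover have "measure_pmf.expectation (state_distr t)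
      (\<lambda>st. (1 - 2 / real l) * potential st + (1 / real l) * (\<Sum>i<m. augmented_value i st)) =
    (1 - 2 / real l) * measure_pmf.expectation (state_distr t) potential +
      (1 / real l) * (\<Sum>i<m. measure_pmf.expectation (state_distr t) (augmented_value i))"
    by (simp add: expectation_add_finite[OF fin] expectation_sum_finite[OF fin])
  moreover have "measure_pmf.expectation (state_distr t)
      (\<lambda>st. (1 - 2 / real l) * potential st + (1 / real l) * (\<Sum>i<m. augmented_value i st)) \<le>
    measure_pmf.expectation (state_distr (Suc t)) potential"
    unfolding expectation_state_distr_Suc
    by (rule expectation_mono_finite[OF fin])
      (use expectation_potential_step_recurrence state_inv_state_distr in auto)
  ultimately show ?thesis by linarith
qed

lemma expectation_potential_mono:
  "measure_pmf.expectation (state_distr t) potential \<le>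
    measure_pmf.expectation (state_distr (Suc t)) potential"
  unfolding expectation_state_distr_Suc
  by (rule expectation_mono_finite[OF finite_set_pmf_state_distr])
    (use expectation_potential_step_mono state_inv_state_distr in auto)

text \<open>For \<open>l \<ge> 2\<close> the coefficient \<open>1 - 2/l\<close> is nonnegative, so the recurrence can be iterated.\<close>
lemma expectation_potential_ge:
  assumes "l \<ge> 2"
  shows "measure_pmf.expectation (state_distr t) potential \<ge>
    ((1 - 1 / real l) ^ t - (1 - 2 / real l) ^ t) * OPT"
proof (induction t)
  case 0
  then show ?case using f'_nonneg by (auto intro!: sum_nonneg)
next
  case (Suc t)
  define a where "a = 1 - 1 / real l"
  define b where "b = 1 - 2 / real l"
  have "b \<ge> 0" using assms by (simp add: b_def field_simps)
  then have "b * ((a ^ t - b ^ t) * OPT) \<le> b * measure_pmf.expectation (state_distr t) potential"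
    using Suc unfolding a_def b_def by (intro mult_left_mono) auto
  moreover have "b * ((a ^ t - b ^ t) * OPT) + (1 / real l) * (a ^ t * OPT) = (a ^ Suc t - b ^ Suc t) * OPT"
    by (simp add: a_def b_def algebra_simps)
  ultimately show ?case
    using expectation_potential_recurrence[of t] unfolding a_def b_def by linarith
qed

lemma expectation_potential_ge_single_round:
  assumes "l = 1"
  shows "measure_pmf.expectation (state_distr 1) potential \<ge> OPT / 2"
proof -
  have "measure_pmf.expectation (state_distr 1) potential \<ge>
      - measure_pmf.expectation (state_distr 0) potential + OPT"
    using expectation_potential_recurrence[of 0] assms by simp
  moreover have "measure_pmf.expectation (state_distr 1) potential \<ge>
      measure_pmf.expectation (state_distr 0) potential"
    using expectation_potential_mono[of 0] by simp
  ultimately show ?thesis by linarith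
qed

lemma Fobj_ge_potential:
  assumes I: "state_inv st"
  shows "Fobj f m k (Inl -` fst st) \<ge> potential st"
  unfolding Fobj_def
proof (rule sum_mono)
  fix i assume "i \<in> {..<m}"
  then have T: "snd st i \<subseteq> fst st" "card (snd st i) \<le> k" "finite (fst st)"
    using I by (auto simp: state_inv_def)
  have "finite {f i A | A. A \<subseteq> Inl -` fst st \<and> card A \<le> k}"
    by (rule finite_subset[of _ "f i ` Pow (Inl -` fst st)"]) (use finite_vimageI[OF T(3) inj_Inl] in auto)
  moreover have "card (Inl -` snd st i :: 'a set) \<le> k"
    using card_vimage_inj_on_le[of Inl UNIV "snd st i"] finite_subset[OF T(1,3)] T(2) by simp
  then have "f i (Inl -` snd st i) \<in> {f i A | A. A \<subseteq> Inl -` fst st \<and> card A \<le> k}"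
    using T(1) by blast
  ultimately have "f i (Inl -` snd st i) \<le> Max {f i A | A. A \<subseteq> Inl -` fst st \<and> card A \<le> k}"
    by (rule Max_ge)
  then show "f' i (snd st i) \<le> Max {f i A | A. A \<subseteq> Inl -` fst st \<and> card A \<le> k}"
    by (simp add: ext_fun_def)
qed

lemma sampling_greedy_eq: "sampling_greedy f m k l selM ch ord = map_pmf (\<lambda>st. Inl -` fst st) (state_distr l)"
  by (simp add: sampling_greedy_def)

lemma sampling_greedy_feasible:
  assumes "S \<in> set_pmf (sampling_greedy f m k l selM ch ord)"
  shows "S \<subseteq> \<Omega> \<and> card S \<le> l"
proof -
  obtain st where st: "st \<in> set_pmf (state_distr l)" "S = Inl -` fst st"
    using assms unfolding sampling_greedy_eq by auto
  note I = state_inv_state_distr[OF st(1)]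
  have "card (Inl -` fst st :: 'a set) \<le> card (fst st)"
    using card_vimage_inj_on_le[of Inl UNIV "fst st"] I by (auto simp: state_inv_def)
  then show ?thesis
    using I st card_state_distr[OF st(1)] by (auto simp: state_inv_def ext_ground_def)
qed

lemma sampling_greedy_expectation_ge:
  "measure_pmf.expectation (sampling_greedy f m k l selM ch ord) (Fobj f m k) \<ge> 1 / (2 * exp 1) * OPT"
proof -
  have E: "measure_pmf.expectation (state_distr l) potential \<le>
      measure_pmf.expectation (sampling_greedy f m k l selM ch ord) (Fobj f m k)"
    unfolding sampling_greedy_eq integral_map_pmf
    by (rule expectation_mono_finite[OF finite_set_pmf_state_distr])
      (use Fobj_ge_potential state_inv_state_distr in auto)
  show ?thesis
  proof (cases "l = 1")
    case True
    have "1 / (2 * exp 1) \<le> (1 / 2 :: real)" by (simp add: field_simps)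
    then have "1 / (2 * exp 1) * OPT \<le> 1 / 2 * OPT" using OPT_nonneg by (rule mult_right_mono)
    moreover have "measure_pmf.expectation (state_distr l) potential \<ge> OPT / 2"
      using expectation_potential_ge_single_round[OF True] True by simp
    ultimately show ?thesis using E by linarith
  next
    case False
    then have l: "l \<ge> 2" using l_pos by simp
    have "1 / (2 * exp 1) * OPT \<le> ((1 - 1 / real l) ^ l - (1 - 2 / real l) ^ l) * OPT"
      using power_gap_ge[OF l] OPT_nonneg by (intro mult_right_mono)
    then show ?thesis using E expectation_potential_ge[OF l, of l] by linarith
  qed
qed

end

lemma Fobj_attained:
  assumes "finite S"
  obtains A where "\<And>i. A i \<subseteq> S" "\<And>i. card (A i) \<le> k" "Fobj f m k S = (\<Sum>i<m. f i (A i))"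
proof -
  have "\<exists>A. A \<subseteq> S \<and> card A \<le> k \<and> f i A = Max {f i A | A. A \<subseteq> S \<and> card A \<le> k}" for i
  proof -
    have "finite {f i A | A. A \<subseteq> S \<and> card A \<le> k}"
      by (rule finite_subset[of _ "f i ` Pow S"]) (use assms in auto)
    moreover have "{f i A | A. A \<subseteq> S \<and> card A \<le> k} \<noteq> {}" by auto
    ultimately have "Max {f i A | A. A \<subseteq> S \<and> card A \<le> k} \<in> {f i A | A. A \<subseteq> S \<and> card A \<le> k}"
      by (rule Max_in)
    then show ?thesis by auto
  qed
  from choice[OF allI[OF this]] obtain A
    where A: "\<forall>i. A i \<subseteq> S \<and> card (A i) \<le> k \<and> f i (A i) = Max {f i A | A. A \<subseteq> S \<and> card A \<le> k}" ..
  show ?thesis by (rule that[of A]) (use A in \<open>auto simp: Fobj_def\<close>)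
qed

theorem mainTheorem4:
  fixes \<Omega> :: "'a set" and f :: "nat \<Rightarrow> 'a set \<Rightarrow> real" and m k l :: nat
    and selM :: "('a + nat) set \<Rightarrow> (nat \<Rightarrow> ('a + nat) set) \<Rightarrow> ('a + nat) set"
    and ch :: "nat \<Rightarrow> ('a + nat) \<Rightarrow> ('a + nat) set \<Rightarrow> ('a + nat)"
    and ord :: "('a + nat) list" and Opt :: "'a set"
  assumes "finite \<Omega>" and "k \<ge> 1" and "l \<ge> 1"
    and "\<And>i A. i < m \<Longrightarrow> A \<subseteq> \<Omega> \<Longrightarrow> f i A \<ge> 0"
    and "\<And>i. i < m \<Longrightarrow> submodular_on \<Omega> (f i)"
    and "valid_selM f m k l \<Omega> selM"
    and "\<And>i. i < m \<Longrightarrow> valid_argmax_choice (ext_fun (f i)) (ch i)"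
    and "distinct ord" and "set ord = ext_ground \<Omega> l"
    and "Opt \<subseteq> \<Omega>" and "card Opt \<le> l"
    and "\<And>S'. S' \<subseteq> \<Omega> \<Longrightarrow> card S' \<le> l \<Longrightarrow> Fobj f m k S' \<le> Fobj f m k Opt"
  shows "(\<forall>S \<in> set_pmf (sampling_greedy f m k l selM ch ord). S \<subseteq> \<Omega> \<and> card S \<le> l) \<and>
         measure_pmf.expectation (sampling_greedy f m k l selM ch ord) (Fobj f m k)
           \<ge> 1 / (2 * exp 1) * Fobj f m k Opt"
proof -
  obtain Oi where Oi: "\<And>i. Oi i \<subseteq> Opt" "\<And>i. card (Oi i) \<le> k"
    and F: "Fobj f m k Opt = (\<Sum>i<m. f i (Oi i))"
    using Fobj_attained[OF finite_subset[OF assms(10,1)]] by blast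
  interpret sampling_greedy_analysis \<Omega> f m k l selM ch ord Opt Oi
    by unfold_locales (use assms Oi in auto)
  show ?thesis
    using sampling_greedy_feasible sampling_greedy_expectation_ge unfolding F by blast
qed

end
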